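(* Let $k\ge2$. For all $\ell\in[n]$ with $\ell\ge k^2+k$ and all $r\in\{0,1,\dots,k\}$, $$\mathbb{E}[v(\mathrm{ALG}^{\ge\ell}_r)]\ \ge\ \left(\frac{r\ell}{(k-1)n}-\frac{1}{k-1}\left(\frac{\ell}{n}\right)^k\sum_{r'=0}^{r-1}\sum_{i=0}^{r'}\frac{(k-1)^i}{i!}\ln^i\!\left(\frac{n}{\ell}\right)-\frac{3k^2r}{(k-1)n}\right)\alpha\, v(\mathrm{OPT}).$$
   Context: Submodular secretary setting. Let $U$ be a finite ground set of $n$ items and $k\ge1$ an integer. Let $v\colon 2^U\to\mathbb{R}_{\ge0}$ be monotone and submodular, and $\mathrm{OPT}\in\arg\max\{v(S): S\subseteq U, |S|\le k\}$. The items arrive one per round (rounds $1,\dots,n$) in a uniformly random order; for $\ell\in[n]$, $U^{\le \ell}$ denotes the set of items arriving in rounds $1,\dots,\ell$. $\mathcal{A}$ is an offline algorithm that, for every $L\subseteq U$, returns a set $\mathcal{A}(L)\subseteq L$ with $|\mathcal{A}(L)|\le k$ and $v(\mathcal{A}(L))\ge \alpha\max\{v(T):T\subseteq L,|T|\le k\}$, where $\alpha\in(0,1]$; $\mathcal{A}(L)$ depends only on the set $L$. Random sets $\mathrm{ALG}^{\ge\ell}_r\subseteq U$ for $\ell\in\{1,\dots,n+1\}$, $r\in\{0,\dots,k\}$ are defined recursively: $\mathrm{ALG}^{\ge\ell}_0=\emptyset$ for all $\ell$, $\mathrm{ALG}^{\ge n+1}_r=\emptyset$ for all $r$, and for $\ell\in[n]$,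 $r\ge1$, letting $j$ be the item arriving in round $\ell$: $\mathrm{ALG}^{\ge\ell}_r=\{j\}\cup\mathrm{ALG}^{\ge\ell+1}_{r-1}$ if $j\in\mathcal{A}(U^{\le\ell})$, and $\mathrm{ALG}^{\ge\ell}_r=\mathrm{ALG}^{\ge\ell+1}_{r}$ otherwise. *)

theory Defs
  imports "HOL-Probability.Probability"
begin

definition monotone_setfun :: "'a set \<Rightarrow> ('a set \<Rightarrow> real) \<Rightarrow> bool" where
  "monotone_setfun U v \<longleftrightarrow> (\<forall>S T. S \<subseteq> T \<and> T \<subseteq> U \<longrightarrow> v S \<le> v T)"

definition submodular_setfun :: "'a set \<Rightarrow> ('a set \<Rightarrow> real) \<Rightarrow> bool" where
  "submodular_setfun U v \<longleftrightarrow>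
     (\<forall>S T. S \<subseteq> U \<and> T \<subseteq> U \<longrightarrow> v (S \<union> T) + v (S \<inter> T) \<le> v S + v T)"

text \<open>An arrival order is a list xs enumerating U without repetition; the item arriving
  in round l (1-based) is xs ! (l - 1), and the set of items arrived in rounds 1..l is
  set (take l xs). The sets ALG^{>= l}_r are given by alg A xs l r (for 1 <= l <= n+1).\<close>

function alg :: "('a set \<Rightarrow> 'a set) \<Rightarrow> 'a list \<Rightarrow> nat \<Rightarrow> nat \<Rightarrow> 'a set" where
  "alg A xs l r =
     (if r = 0 \<or> l = 0 \<or> length xs < l then {}
      else (let j = xs ! (l - 1) in
            if j \<in> A (set (take l xs)) then insert j (alg A xs (l + 1) (r - 1))
            else alg A xs (l + 1) r))"
  by pat_completeness auto
termination
  by (relation "Wellfounded.measure (\<lambda>(A, xs, l, r). Suc (length xs) - l)") auto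

declare alg.simps [simp del]

end

theory Submission
  imports Defs
begin

text \<open>
  Condition on the set \<open>L\<close> of the first \<open>l\<close> arrivals. By symmetry of the random order, the
  item arriving in round \<open>l\<close> is a uniform element of \<open>L\<close>, and it is accepted iff it lies in
  \<open>\<A>(L)\<close>. At most \<open>k\<close> elements of \<open>L\<close> are accepting, and by submodularity their marginal
  values on top of the later selection add up to at least \<open>v(\<A>(L)) \<ge> \<alpha> v(OPT \<inter> L)\<close>, whose
  expectation is at least \<open>(l/n) \<alpha> v(OPT)\<close>. This gives the recursion
  \<open>l E[ALG\<^sup>\<ge>\<^sup>l\<^sub>r] \<ge> (l - k) E[ALG\<^sup>\<ge>\<^sup>l\<^sup>+\<^sup>1\<^sub>r] + (k - 1) E[ALG\<^sup>\<ge>\<^sup>l\<^sup>+\<^sup>1\<^sub>r\<^sub>-\<^sub>1] + \<alpha> (l/n) v(OPT)\<close>.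

  Its continuous analogue is solved by
  \<open>h\<^sub>r(y) = r y - y\<^sup>k \<Sum>\<^sub>r\<^sub>'\<^sub><\<^sub>r \<Sum>\<^sub>i\<^sub>\<le>\<^sub>r\<^sub>' ((k - 1) ln(1/y))\<^sup>i / i!\<close>, which satisfies
  \<open>y h\<^sub>r' = k h\<^sub>r - (k - 1) h\<^sub>r\<^sub>-\<^sub>1 - (k - 1) y\<close> and \<open>h\<^sub>r(1) = 0\<close>; since \<open>|h\<^sub>r'| \<le> k r\<close> on \<open>(0, 1]\<close>,
  one discrete step loses only \<open>O(k\<^sup>2 r / n)\<close>, which the term \<open>3 k\<^sup>2 r / n\<close> absorbs. Downward
  induction on \<open>l\<close> starting from \<open>l = n\<close> then yields the bound, for every \<open>l \<ge> k\<close>.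
\<close>

section \<open>The function \<open>h\<^sub>r\<close>\<close>

definition exp_taylor :: "nat \<Rightarrow> real \<Rightarrow> real" where
  "exp_taylor m u = (\<Sum>i\<le>m. u ^ i / fact i)"

lemma exp_taylor_Suc: "exp_taylor (Suc m) u = exp_taylor m u + u ^ Suc m / fact (Suc m)"
  by (simp add: exp_taylor_def)

lemma exp_taylor_0 [simp]: "exp_taylor 0 u = 1"
  by (simp add: exp_taylor_def)

lemma exp_taylor_at_0 [simp]: "exp_taylor m 0 = 1"
  by (induction m) (simp_all add: exp_taylor_Suc)

lemma exp_taylor_nonneg: "0 \<le> u \<Longrightarrow> 0 \<le> exp_taylor m u"
  unfolding exp_taylor_def by (auto intro!: sum_nonneg)

lemma exp_taylor_le_exp:
  assumes "0 \<le> u"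
  shows "exp_taylor m u \<le> exp u"
proof -
  have "exp_taylor m u = (\<Sum>i<Suc m. u ^ i / fact i)"
    by (simp add: exp_taylor_def lessThan_Suc_atMost)
  also have "\<dots> \<le> (\<Sum>i. u ^ i / fact i)"
    using summable_exp[of u] assms by (intro sum_le_suminf) (auto simp: divide_inverse mult.commute)
  also have "\<dots> = exp u"
    by (simp add: exp_def divide_inverse mult.commute)
  finally show ?thesis .
qed

lemma has_real_derivative_exp_taylor_Suc:
  "(exp_taylor (Suc m) has_real_derivative exp_taylor m u) (at u)"
proof (induction m)
  case 0
  show ?case
    by (simp add: exp_taylor_def) (auto intro!: derivative_eq_intros)
next
  case (Suc m)
  have "((\<lambda>u. u ^ Suc (Suc m) / fact (Suc (Suc m))) has_real_derivative
      real (Suc (Suc m)) * u ^ Suc m / fact (Suc (Suc m))) (at u)"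
    using DERIV_pow[of "Suc (Suc m)" u] by (intro DERIV_cdivide) simp
  moreover have "real (Suc (Suc m)) * u ^ Suc m / fact (Suc (Suc m)) = u ^ Suc m / fact (Suc m)"
    by (simp only: fact_Suc[of "Suc m"]) simp
  ultimately have "((\<lambda>u. u ^ Suc (Suc m) / fact (Suc (Suc m))) has_real_derivative u ^ Suc m / fact (Suc m)) (at u)"
    by simp
  from DERIV_add[OF Suc.IH this] show ?case
    by (simp add: exp_taylor_Suc[abs_def] exp_taylor_Suc)
qed

definition guarantee_sum :: "nat \<Rightarrow> nat \<Rightarrow> real \<Rightarrow> real" where
  "guarantee_sum k r y = (\<Sum>r'<r. exp_taylor r' ((real k - 1) * - ln y))"

lemma guarantee_sum_Suc:
  "guarantee_sum k (Suc r) y = guarantee_sum k r y + exp_taylor r ((real k - 1) * - ln y)"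
  by (simp add: guarantee_sum_def)

lemma has_real_derivative_guarantee_sum:
  assumes "0 < y"
  shows "(guarantee_sum k r has_real_derivative - (real k - 1) / y * guarantee_sum k (r - 1) y) (at y)"
proof (induction r)
  case 0
  show ?case by (simp add: guarantee_sum_def)
next
  case (Suc r)
  note IH = Suc.IH
  define u where "u y = (real k - 1) * - ln y" for y
  have du: "(u has_real_derivative - (real k - 1) / y) (at y)"
    unfolding u_def using assms by (auto intro!: derivative_eq_intros simp: field_simps)
  show ?case
  proof (cases r)
    case 0
    then show ?thesis by (simp add: guarantee_sum_def)
  next
    case (Suc m)
    have "((\<lambda>y. exp_taylor r (u y)) has_real_derivative exp_taylor m (u y) * (- (real k - 1) / y)) (at y)"
      using DERIV_chain2[OF has_real_derivative_exp_taylor_Suc du] Suc by simp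
    from DERIV_add[OF IH this] show ?thesis
      using Suc by (simp add: guarantee_sum_Suc[abs_def] guarantee_sum_Suc u_def algebra_simps)
  qed
qed

definition guarantee :: "nat \<Rightarrow> nat \<Rightarrow> real \<Rightarrow> real" where
  "guarantee k r y = real r * y - y ^ k * guarantee_sum k r y"

definition guarantee_deriv :: "nat \<Rightarrow> nat \<Rightarrow> real \<Rightarrow> real" where
  "guarantee_deriv k r y = real r - real k * (y ^ (k - 1) * guarantee_sum k r y)
     + (real k - 1) * (y ^ (k - 1) * guarantee_sum k (r - 1) y)"

lemma guarantee_budget_0 [simp]: "guarantee k 0 y = 0"
  by (simp add: guarantee_def guarantee_sum_def)

lemma guarantee_at_1 [simp]: "guarantee k r 1 = 0"
  by (simp add: guarantee_def guarantee_sum_def)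

lemma has_real_derivative_guarantee:
  assumes "0 < y" "1 \<le> k"
  shows "(guarantee k r has_real_derivative guarantee_deriv k r y) (at y)"
proof -
  have d: "(guarantee k r has_real_derivative
      real r - (real k * y ^ (k - 1) * guarantee_sum k r y
        + y ^ k * (- (real k - 1) / y * guarantee_sum k (r - 1) y))) (at y)"
    unfolding guarantee_def[abs_def]
    by (auto intro!: derivative_eq_intros has_real_derivative_guarantee_sum[OF assms(1)])
  have e: "y ^ k * (- (real k - 1) / y * guarantee_sum k (r - 1) y)
      = - (real k - 1) * (y ^ (k - 1) * guarantee_sum k (r - 1) y)"
    using assms by (simp add: power_eq_if)
  show ?thesis
    using d unfolding e by (rule DERIV_cong) (simp add: guarantee_deriv_def algebra_simps)
qed

lemma exp_taylor_scaled_bounds: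
  assumes y: "0 < y" "y \<le> 1" and k: "1 \<le> k"
  shows "0 \<le> y ^ (k - 1) * exp_taylor m ((real k - 1) * - ln y)"
    and "y ^ (k - 1) * exp_taylor m ((real k - 1) * - ln y) \<le> 1"
proof -
  have u: "0 \<le> (real k - 1) * - ln y"
    using y k by (intro mult_nonneg_nonneg) auto
  show "0 \<le> y ^ (k - 1) * exp_taylor m ((real k - 1) * - ln y)"
    using y u by (simp add: exp_taylor_nonneg)
  have "exp ((real k - 1) * - ln y) = exp (- ln y) ^ (k - 1)"
    using k by (simp add: of_nat_diff flip: exp_of_nat_mult)
  also have "\<dots> = inverse (y ^ (k - 1))"
    using y by (simp add: exp_minus power_inverse)
  finally have "y ^ (k - 1) * exp ((real k - 1) * - ln y) = 1"
    using y by simp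
  moreover have "y ^ (k - 1) * exp_taylor m ((real k - 1) * - ln y)
      \<le> y ^ (k - 1) * exp ((real k - 1) * - ln y)"
    using y u by (intro mult_left_mono exp_taylor_le_exp) auto
  ultimately show "y ^ (k - 1) * exp_taylor m ((real k - 1) * - ln y) \<le> 1"
    by simp
qed

lemma guarantee_sum_scaled_bounds:
  assumes "0 < y" "y \<le> 1" "1 \<le> k"
  shows "0 \<le> y ^ (k - 1) * guarantee_sum k r y" "y ^ (k - 1) * guarantee_sum k r y \<le> real r"
proof -
  have eq: "y ^ (k - 1) * guarantee_sum k r y = (\<Sum>r'<r. y ^ (k - 1) * exp_taylor r' ((real k - 1) * - ln y))"
    by (simp add: guarantee_sum_def sum_distrib_left)
  show "0 \<le> y ^ (k - 1) * guarantee_sum k r y"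
    unfolding eq by (intro sum_nonneg exp_taylor_scaled_bounds(1)[OF assms])
  have "(\<Sum>r'<r. y ^ (k - 1) * exp_taylor r' ((real k - 1) * - ln y)) \<le> (\<Sum>r'<r. 1)"
    by (intro sum_mono exp_taylor_scaled_bounds(2)[OF assms])
  then show "y ^ (k - 1) * guarantee_sum k r y \<le> real r"
    unfolding eq by simp
qed

lemma abs_guarantee_deriv_le:
  assumes "0 < y" "y \<le> 1" "1 \<le> k"
  shows "\<bar>guarantee_deriv k r y\<bar> \<le> real k * real r"
proof -
  define a where "a = y ^ (k - 1) * guarantee_sum k r y"
  define b where "b = y ^ (k - 1) * guarantee_sum k (r - 1) y"
  have "0 \<le> a" "a \<le> real r" "0 \<le> b" "b \<le> real r"
    unfolding a_def b_def using guarantee_sum_scaled_bounds[OF assms, of r] guarantee_sum_scaled_bounds[OF assms, of "r - 1"]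
    by auto
  moreover have "0 \<le> real k - 1"
    using assms(3) by simp
  ultimately have "real k * a \<le> real k * real r" "(real k - 1) * b \<le> (real k - 1) * real r"
    "0 \<le> real k * a" "0 \<le> (real k - 1) * b"
    by (auto intro: mult_left_mono)
  then show ?thesis
    unfolding guarantee_deriv_def a_def[symmetric] b_def[symmetric] abs_le_iff
    by (simp add: algebra_simps)
qed

lemma guarantee_lipschitz:
  assumes "0 < a" "a \<le> b" "b \<le> 1" "1 \<le> k"
  shows "\<bar>guarantee k r b - guarantee k r a\<bar> \<le> real k * real r * (b - a)"
proof (cases "a = b")
  case False
  then obtain z where z: "a < z" "z < b" "guarantee k r b - guarantee k r a = (b - a) * guarantee_deriv k r z"
    using MVT2[of a b "guarantee k r" "guarantee_deriv k r"] has_real_derivative_guarantee assms by force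
  have "\<bar>guarantee_deriv k r z\<bar> \<le> real k * real r"
    using z assms by (intro abs_guarantee_deriv_le) auto
  then show ?thesis
    using z assms by (simp add: abs_mult mult_left_mono mult.commute)
qed simp

lemma guarantee_increment_le:
  assumes "0 < a" "a \<le> b" "b \<le> 1" "1 \<le> k" "0 \<le> c" "c * (b - a) \<le> 1"
  shows "c * \<bar>guarantee k r b - guarantee k r a\<bar> \<le> real k * real r"
proof -
  have "c * \<bar>guarantee k r b - guarantee k r a\<bar> \<le> c * (real k * real r * (b - a))"
    using assms guarantee_lipschitz by (intro mult_left_mono) auto
  also have "\<dots> = real k * real r * (c * (b - a))"
    by simp
  also have "\<dots> \<le> real k * real r"
    using assms by (intro mult_left_le) auto
  finally show ?thesis .
qed

lemma guarantee_ode: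
  assumes "1 \<le> k" "1 \<le> r"
  shows "y * guarantee_deriv k r y
    = real k * guarantee k r y - (real k - 1) * guarantee k (r - 1) y - (real k - 1) * y"
proof -
  have "y ^ k = y * y ^ (k - 1)"
    using assms(1) by (simp add: power_eq_if)
  moreover have "real (r - 1) = real r - 1"
    using assms(2) by simp
  ultimately show ?thesis
    unfolding guarantee_deriv_def guarantee_def by (simp add: algebra_simps)
qed

lemma discretisation_error_le:
  fixes d e p q k r :: real
  assumes e: "-1 \<le> e" "e \<le> 0" and bounds: "\<bar>d\<bar> \<le> k * r" "p \<le> k * r" "- q \<le> k * r"
    and k: "1 \<le> k" and r: "0 \<le> r"
  shows "- e * d + k * p - (k - 1) * q - (k - 1) * e \<le> 3 * k ^ 2 * (r + k - 1)"
proof -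
  have "\<bar>e * d\<bar> \<le> 1 * (k * r)"
    unfolding abs_mult using e bounds(1) by (intro mult_mono) auto
  then have "- e * d \<le> k * r"
    by (simp add: abs_le_iff)
  moreover have "k * p \<le> k * (k * r)" "(k - 1) * - q \<le> (k - 1) * (k * r)"
      "(k - 1) * (k * r) \<le> k * (k * r)" "(k - 1) * - e \<le> (k - 1) * 1"
    using mult_left_mono[OF bounds(2), of k] mult_left_mono[OF bounds(3), of "k - 1"]
      mult_right_mono[of "k - 1" k "k * r"] mult_left_mono[of "- e" 1 "k - 1"] k r e
    by simp_all
  moreover have "1 \<le> 3 * k ^ 2"
    using k one_le_power[of k 2] by linarith
  then have "k * r \<le> k * (k * r)" "k - 1 \<le> 3 * k ^ 2 * (k - 1)"
    using mult_right_mono[OF k, of "k * r"] mult_right_mono[of 1 "3 * k ^ 2" "k - 1"] k r by simp_all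
  ultimately show ?thesis
    by (simp add: power2_eq_square algebra_simps)
qed

lemma discretisation_defect_eq:
  fixes n l k h h' g' h\<^sub>\<eta> g\<^sub>\<eta> \<eta> d :: real
  assumes mvt: "n * h = n * h' - d"
    and ode: "\<eta> * d = k * h\<^sub>\<eta> - (k - 1) * g\<^sub>\<eta> - (k - 1) * \<eta>"
  shows "n * (l * h - (l - k) * h' - (k - 1) * g') - (k - 1) * l
    = - (l - n * \<eta>) * d + k * (n * (h' - h\<^sub>\<eta>)) - (k - 1) * (n * (g' - g\<^sub>\<eta>)) - (k - 1) * (l - n * \<eta>)"
proof -
  have "n * (l * h - (l - k) * h' - (k - 1) * g') - (k - 1) * l
      - (- (l - n * \<eta>) * d + k * (n * (h' - h\<^sub>\<eta>)) - (k - 1) * (n * (g' - g\<^sub>\<eta>)) - (k - 1) * (l - n * \<eta>))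
    = l * (n * h - (n * h' - d)) - n * (\<eta> * d - (k * h\<^sub>\<eta> - (k - 1) * g\<^sub>\<eta> - (k - 1) * \<eta>))"
    by (simp add: algebra_simps)
  then show ?thesis
    using mvt ode by simp
qed

lemma guarantee_step_defect:
  fixes l n :: nat
  assumes k: "1 \<le> k" and r: "1 \<le> r" and l: "0 < l" "l < n"
  shows "real n * (real l * guarantee k r (real l / real n)
           - (real l - real k) * guarantee k r (real (Suc l) / real n)
           - (real k - 1) * guarantee k (r - 1) (real (Suc l) / real n))
         - (real k - 1) * real l
       \<le> 3 * real k ^ 2 * (real r + real k - 1)"
proof -
  define x x' where "x = real l / real n" and "x' = real (Suc l) / real n"
  have n: "0 < real n"
    using l by simp
  have nx: "real n * x = real l" "real n * x' = real l + 1"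
    using n by (simp_all add: x_def x'_def)
  have x: "0 < x" "x < x'" "x' \<le> 1"
    using n l by (simp_all add: x_def x'_def divide_strict_right_mono)
  obtain \<eta> where \<eta>: "x < \<eta>" "\<eta> < x'"
    and mvt: "guarantee k r x' - guarantee k r x = (x' - x) * guarantee_deriv k r \<eta>"
    using MVT2[of x x' "guarantee k r" "guarantee_deriv k r"] has_real_derivative_guarantee x k by force
  define d e p q where "d = guarantee_deriv k r \<eta>" and "e = real l - real n * \<eta>"
    and "p = real n * (guarantee k r x' - guarantee k r \<eta>)"
    and "q = real n * (guarantee k (r - 1) x' - guarantee k (r - 1) \<eta>)"
  have "real n * guarantee k r x = real n * guarantee k r x' - d"
  proof -
    have "real n * (guarantee k r x' - guarantee k r x) = real n * (x' - x) * d"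
      by (simp add: mvt d_def)
    also have "real n * (x' - x) = 1"
      using nx by (simp add: algebra_simps)
    finally show ?thesis
      by (simp add: algebra_simps)
  qed
  moreover have "\<eta> * d = real k * guarantee k r \<eta> - (real k - 1) * guarantee k (r - 1) \<eta> - (real k - 1) * \<eta>"
    unfolding d_def using guarantee_ode[OF k r] .
  ultimately have defect: "real n * (real l * guarantee k r x - (real l - real k) * guarantee k r x'
      - (real k - 1) * guarantee k (r - 1) x') - (real k - 1) * real l
    = - e * d + real k * p - (real k - 1) * q - (real k - 1) * e"
    unfolding e_def p_def q_def by (rule discretisation_defect_eq)
  have "real n * x < real n * \<eta>" "real n * \<eta> < real n * x'"
    using \<eta> n by simp_all
  then have e: "-1 \<le> e" "e \<le> 0"
    using nx by (simp_all add: e_def)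
  have "\<bar>d\<bar> \<le> real k * real r"
    unfolding d_def using \<eta> x k by (intro abs_guarantee_deriv_le) auto
  moreover have "p \<le> real k * real r" "- q \<le> real k * real r"
  proof -
    have "real n * (x' - \<eta>) \<le> 1"
      using nx e by (simp add: e_def algebra_simps)
    then have "real n * \<bar>guarantee k r' x' - guarantee k r' \<eta>\<bar> \<le> real k * real r'" for r'
      using \<eta> x k n by (intro guarantee_increment_le) auto
    then have "\<bar>p\<bar> \<le> real k * real r" "\<bar>q\<bar> \<le> real k * real (r - 1)"
      unfolding p_def q_def abs_mult using n by simp_all
    moreover have "real k * real (r - 1) \<le> real k * real r"
      by (simp add: mult_left_mono)
    ultimately show "p \<le> real k * real r" "- q \<le> real k * real r"
      by (simp_all add: abs_le_iff)
  qed
  ultimately have "- e * d + real k * p - (real k - 1) * q - (real k - 1) * e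
      \<le> 3 * real k ^ 2 * (real r + real k - 1)"
    using e k by (intro discretisation_error_le) auto
  with defect show ?thesis
    by (simp add: x_def x'_def)
qed

lemma guarantee_backward_step:
  fixes l n :: nat
  assumes k: "1 \<le> k" and r: "1 \<le> r" and l: "0 < l" "l < n"
  shows "real l * (guarantee k r (real l / real n) - 3 * real k ^ 2 * real r / real n)
    \<le> (real l - real k) * (guarantee k r (real (Suc l) / real n) - 3 * real k ^ 2 * real r / real n)
      + (real k - 1) * (guarantee k (r - 1) (real (Suc l) / real n) - 3 * real k ^ 2 * real (r - 1) / real n)
      + (real k - 1) * real l / real n"
proof -
  define h h' g' where "h = guarantee k r (real l / real n)"
    and "h' = guarantee k r (real (Suc l) / real n)" and "g' = guarantee k (r - 1) (real (Suc l) / real n)"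
  have n: "0 < real n"
    using l by simp
  define D where "D = real n * (real l * h - (real l - real k) * h' - (real k - 1) * g') - (real k - 1) * real l"
  have D_le: "D \<le> 3 * real k ^ 2 * (real r + real k - 1)"
    unfolding D_def h_def h'_def g'_def by (rule guarantee_step_defect[OF k r l])
  have "real (r - 1) = real r - 1"
    using r by simp
  then have "(real l - real k) * (h' - 3 * real k ^ 2 * real r / real n)
      + (real k - 1) * (g' - 3 * real k ^ 2 * real (r - 1) / real n)
      + (real k - 1) * real l / real n - real l * (h - 3 * real k ^ 2 * real r / real n)
    = (3 * real k ^ 2 * (real r + real k - 1) - D) / real n"
    using n unfolding D_def by (simp add: field_simps)
  moreover have "0 \<le> (3 * real k ^ 2 * (real r + real k - 1) - D) / real n"
    using D_le n by simp
  ultimately show ?thesis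
    unfolding h_def h'_def g'_def by linarith
qed

lemma guarantee_bound_formula:
  fixes l n :: nat
  assumes "0 < l" "0 < n" "2 \<le> k"
  shows "(real r * real l / ((real k - 1) * real n)
        - 1 / (real k - 1) * (real l / real n) ^ k
          * (\<Sum>r'<r. \<Sum>i\<le>r'. (real k - 1) ^ i / fact i * (ln (real n / real l)) ^ i)
        - 3 * real k ^ 2 * real r / ((real k - 1) * real n)) * x * y
    = x * y / (real k - 1) * (guarantee k r (real l / real n) - 3 * real k ^ 2 * real r / real n)"
proof -
  have "- ln (real l / real n) = ln (real n / real l)"
    using assms by (simp add: ln_div)
  then have "guarantee k r (real l / real n) = real r * real l / real n - (real l / real n) ^ k
      * (\<Sum>r'<r. \<Sum>i\<le>r'. (real k - 1) ^ i / fact i * ln (real n / real l) ^ i)"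
    by (simp add: guarantee_def guarantee_sum_def exp_taylor_def power_mult_distrib)
  moreover have "(a / (K * m) - 1 / K * Y * S - c / (K * m)) * x * y
      = x * y / K * (a / m - Y * S - c / m)" if "K \<noteq> 0" "m \<noteq> 0" for a Y S c K m :: real
    using that by (simp add: field_simps)
  ultimately show ?thesis
    using assms by simp
qed

lemma lower_bound_step:
  fixes B G\<^sub>0 G\<^sub>1 G\<^sub>2 F\<^sub>0 F\<^sub>1 F\<^sub>2 a b c m :: real
  assumes "m * G\<^sub>0 \<le> a * G\<^sub>1 + b * G\<^sub>2 + c" and "a * F\<^sub>1 + b * F\<^sub>2 + B * c \<le> m * F\<^sub>0"
    and "B * G\<^sub>1 \<le> F\<^sub>1" "B * G\<^sub>2 \<le> F\<^sub>2" "0 \<le> B" "0 \<le> a" "0 \<le> b" "0 < m"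
  shows "B * G\<^sub>0 \<le> F\<^sub>0"
proof -
  have "m * (B * G\<^sub>0) \<le> B * (a * G\<^sub>1 + b * G\<^sub>2 + c)"
    using mult_left_mono[OF assms(1,5)] by (simp add: mult.left_commute)
  also have "\<dots> = a * (B * G\<^sub>1) + b * (B * G\<^sub>2) + B * c"
    by (simp add: algebra_simps)
  also have "\<dots> \<le> a * F\<^sub>1 + b * F\<^sub>2 + B * c"
    using assms by (intro add_mono mult_left_mono) auto
  also have "\<dots> \<le> m * F\<^sub>0"
    by fact
  finally show ?thesis
    using \<open>0 < m\<close> by simp
qed

section \<open>Random arrival orders\<close>

lemma alg_step:
  assumes "1 \<le> l" "l \<le> length xs" "1 \<le> r"
  shows "alg A xs l r = (if xs ! (l - 1) \<in> A (set (take l xs))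
    then insert (xs ! (l - 1)) (alg A xs (Suc l) (r - 1)) else alg A xs (Suc l) r)"
  using assms by (subst alg.simps) (simp add: Let_def)

lemma alg_subset_set: "alg A xs l r \<subseteq> set xs"
proof (induction A xs l r rule: alg.induct)
  case (1 A xs l r)
  then show ?case
    by (subst alg.simps) (auto simp: Let_def intro!: nth_mem)
qed

lemma alg_mono_budget: "alg A xs l r \<subseteq> alg A xs l (Suc r)"
proof (induction A xs l r rule: alg.induct)
  case (1 A xs l r)
  show ?case
  proof (cases "r = 0 \<or> l = 0 \<or> length xs < l")
    case True
    then show ?thesis by (subst alg.simps) simp
  next
    case False
    then show ?thesis
      using 1 by (simp add: alg_step[of l xs r] alg_step[of l xs "Suc r"]) blast
  qed
qed

lemma alg_cong_suffix:
  assumes "length ys = length xs"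
    and "\<And>i. l \<le> i \<Longrightarrow> i \<le> length xs \<Longrightarrow> set (take i ys) = set (take i xs) \<and> ys ! (i - 1) = xs ! (i - 1)"
  shows "alg A ys l r = alg A xs l r"
  using assms
proof (induction A xs l r rule: alg.induct)
  case (1 A xs l r)
  show ?case
  proof (cases "r = 0 \<or> l = 0 \<or> length xs < l")
    case True
    then show ?thesis
      using 1(3) by (subst (1 2) alg.simps) simp
  next
    case False
    then show ?thesis
      using 1 by (simp add: alg_step[of l xs] alg_step[of l ys])
  qed
qed

definition list_swap :: "nat \<Rightarrow> nat \<Rightarrow> 'a list \<Rightarrow> 'a list" where
  "list_swap p q xs = xs[p := xs ! q, q := xs ! p]"

lemma length_list_swap [simp]: "length (list_swap p q xs) = length xs"
  by (simp add: list_swap_def)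

lemma nth_list_swap:
  "p < length xs \<Longrightarrow> q < length xs \<Longrightarrow>
    list_swap p q xs ! i = (if i = q then xs ! p else if i = p then xs ! q else xs ! i)"
  by (simp add: list_swap_def nth_list_update)

lemma list_swap_list_swap:
  "p < length xs \<Longrightarrow> q < length xs \<Longrightarrow> list_swap p q (list_swap p q xs) = xs"
  by (rule nth_equalityI) (auto simp: nth_list_swap)

lemma set_take_list_swap:
  assumes "p < i" "q < i" "i \<le> length xs"
  shows "set (take i (list_swap p q xs)) = set (take i xs)"
proof -
  have "take i (list_swap p q xs) = (take i xs)[p := take i xs ! q, q := take i xs ! p]"
    using assms by (simp add: list_swap_def take_update_swap)
  then show ?thesis
    using assms by (simp only:) (rule set_swap; simp)
qed

lemma alg_list_swap:
  assumes "p < l" "q < l"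
  shows "alg A (list_swap p q xs) (Suc l) r = alg A xs (Suc l) r"
proof (rule alg_cong_suffix)
  fix i assume i: "Suc l \<le> i" "i \<le> length xs"
  have "set (take i (list_swap p q xs)) = set (take i xs)"
    using i assms by (intro set_take_list_swap) auto
  moreover have "list_swap p q xs ! (i - 1) = xs ! (i - 1)"
    using i assms by (subst nth_list_swap) auto
  ultimately show "set (take i (list_swap p q xs)) = set (take i xs)
      \<and> list_swap p q xs ! (i - 1) = xs ! (i - 1)" ..
qed simp

lemma list_swap_in_permutations_of_set:
  "xs \<in> permutations_of_set U \<Longrightarrow> p < length xs \<Longrightarrow> q < length xs \<Longrightarrow>
    list_swap p q xs \<in> permutations_of_set U"
  by (auto simp: permutations_of_set_def list_swap_def)

lemma sum_permutations_of_set_list_swap: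
  assumes "finite U" "p < card U" "q < card U"
  shows "(\<Sum>xs\<in>permutations_of_set U. f (list_swap p q xs)) = (\<Sum>xs\<in>permutations_of_set U. f xs)"
  using assms length_finite_permutations_of_set[of _ U]
  by (intro sum.reindex_bij_witness[where i = "list_swap p q" and j = "list_swap p q"])
    (auto simp: list_swap_list_swap intro: list_swap_in_permutations_of_set)

lemma sum_permutations_of_set_nth_eq:
  assumes "finite U" "p < card U" "q < card U"
    and "\<And>xs j. xs \<in> permutations_of_set U \<Longrightarrow> g (list_swap p q xs) j = g xs j"
  shows "(\<Sum>xs\<in>permutations_of_set U. g xs (xs ! p)) = (\<Sum>xs\<in>permutations_of_set U. g xs (xs ! q))"
proof -
  have "(\<Sum>xs\<in>permutations_of_set U. g xs (xs ! p))
      = (\<Sum>xs\<in>permutations_of_set U. g (list_swap p q xs) (list_swap p q xs ! p))"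
    using sum_permutations_of_set_list_swap[OF assms(1-3), of "\<lambda>ys. g ys (ys ! p)"] by simp
  also have "\<dots> = (\<Sum>xs\<in>permutations_of_set U. g xs (xs ! q))"
    using assms length_finite_permutations_of_set[of _ U]
    by (intro sum.cong) (auto simp: nth_list_swap)
  finally show ?thesis .
qed

lemma sum_set_take_distinct:
  assumes "distinct xs" "l \<le> length xs"
  shows "(\<Sum>j\<in>set (take l xs). f j) = (\<Sum>p<l. f (xs ! p))"
  using assms by (simp add: sum_list_distinct_conv_sum_set[symmetric] sum_list_sum_nth atLeast0LessThan)

lemma sum_permutations_of_set_prefix:
  assumes "finite U" "l \<le> card U"
  shows "(\<Sum>xs\<in>permutations_of_set U. \<Sum>j\<in>set (take l xs). g xs j)
    = (\<Sum>p<l. \<Sum>xs\<in>permutations_of_set U. g xs (xs ! p))"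
proof -
  have "(\<Sum>xs\<in>permutations_of_set U. \<Sum>j\<in>set (take l xs). g xs j)
      = (\<Sum>xs\<in>permutations_of_set U. \<Sum>p<l. g xs (xs ! p))"
    using assms permutations_of_setD(2) length_finite_permutations_of_set[of _ U]
    by (intro sum.cong refl sum_set_take_distinct) auto
  then show ?thesis
    by (simp add: sum.swap[of _ "{..<l}"])
qed

lemma sum_permutations_of_set_prefix_indicator:
  assumes "finite U" "x \<in> U" "l \<le> card U"
  shows "(\<Sum>xs\<in>permutations_of_set U. of_bool (x \<in> set (take l xs)) :: real)
    = real l * real (card (permutations_of_set U)) / real (card U)"
proof -
  define c where "c p = (\<Sum>xs\<in>permutations_of_set U. of_bool (xs ! p = x) :: real)" for p
  have count: "(\<Sum>xs\<in>permutations_of_set U. of_bool (x \<in> set (take m xs)) :: real) = real m * c 0"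
    if "m \<le> card U" for m
  proof -
    have indicator: "of_bool (x \<in> set (take m xs)) = (\<Sum>j\<in>set (take m xs). of_bool (j = x) :: real)" for xs
      by (simp add: of_bool_def sum.delta)
    have "(\<Sum>xs\<in>permutations_of_set U. of_bool (x \<in> set (take m xs)) :: real) = (\<Sum>p<m. c p)"
      unfolding c_def indicator
      by (rule sum_permutations_of_set_prefix[OF assms(1) that, where g = "\<lambda>_ j. of_bool (j = x)"])
    also have "\<dots> = (\<Sum>p<m. c 0)"
      unfolding c_def using assms(1) that
      by (intro sum.cong refl sum_permutations_of_set_nth_eq[where g = "\<lambda>_ j. of_bool (j = x)"]) auto
    finally show ?thesis
      by simp
  qed
  have "(\<Sum>xs\<in>permutations_of_set U. of_bool (x \<in> set (take (card U) xs)) :: real)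
      = (\<Sum>xs\<in>permutations_of_set U. 1)"
    using assms(2) permutations_of_setD(1) length_finite_permutations_of_set[of _ U]
    by (intro sum.cong) auto
  with count[of "card U"] have "real (card U) * c 0 = real (card (permutations_of_set U))"
    by simp
  moreover have "0 < card U"
    using assms(1,2) card_gt_0_iff by blast
  ultimately show ?thesis
    using count[OF assms(3)] by (simp add: field_simps)
qed

section \<open>Submodular functions on random prefixes\<close>

lemma monotone_setfunD: "monotone_setfun U v \<Longrightarrow> S \<subseteq> T \<Longrightarrow> T \<subseteq> U \<Longrightarrow> v S \<le> v T"
  unfolding monotone_setfun_def by blast

lemma submodular_setfunD:
  "submodular_setfun U v \<Longrightarrow> S \<subseteq> U \<Longrightarrow> T \<subseteq> U \<Longrightarrow> v (S \<union> T) + v (S \<inter> T) \<le> v S + v T"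
  unfolding submodular_setfun_def by blast

lemma submodular_union_le_sum_marginals:
  assumes sub: "submodular_setfun U v" and "finite B" "B \<subseteq> U" "S \<subseteq> U"
  shows "v (B \<union> S) - v S \<le> (\<Sum>j\<in>B. v (insert j S) - v S)"
  using assms(2,3)
proof (induction B rule: finite_induct)
  case (insert b B)
  have "insert b S \<union> (B \<union> S) = insert b B \<union> S" "insert b S \<inter> (B \<union> S) = S"
    using insert.hyps(2) by auto
  then have "v (insert b B \<union> S) + v S \<le> v (insert b S) + v (B \<union> S)"
    using submodular_setfunD[OF sub, of "insert b S" "B \<union> S"] insert.prems assms(4) by simp
  with insert show ?case
    by simp
qed simp

lemma submodular_inter_ge_sum_marginals:
  assumes sub: "submodular_setfun U v" and os: "distinct os" "set os \<subseteq> U" and "t \<le> length os"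
  shows "v {} + (\<Sum>i<t. of_bool (os ! i \<in> R) * (v (set (take (Suc i) os)) - v (set (take i os))))
    \<le> v (set (take t os) \<inter> R)"
  using assms(4)
proof (induction t)
  case (Suc t)
  define x T where "x = os ! t" and "T = set (take t os)"
  have "take (Suc t) os = take t os @ [x]"
    using Suc.prems by (simp add: x_def take_Suc_conv_app_nth)
  moreover have "distinct (take (Suc t) os)"
    using os(1) by simp
  ultimately have prefix: "set (take (Suc t) os) = insert x T" and "x \<notin> T"
    by (simp_all add: T_def)
  have "of_bool (x \<in> R) * (v (insert x T) - v T) \<le> v (insert x T \<inter> R) - v (T \<inter> R)"
  proof (cases "x \<in> R")
    case True
    have "insert x T \<subseteq> U"
      using set_take_subset[of "Suc t" os] os(2) unfolding prefix by blast
    moreover have "insert x (T \<inter> R) \<union> T = insert x T" "insert x (T \<inter> R) \<inter> T = T \<inter> R"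
      using \<open>x \<notin> T\<close> by auto
    ultimately have "v (insert x T) + v (T \<inter> R) \<le> v (insert x (T \<inter> R)) + v T"
      using submodular_setfunD[OF sub, of "insert x (T \<inter> R)" T] by auto
    moreover have "insert x T \<inter> R = insert x (T \<inter> R)"
      using True by blast
    ultimately show ?thesis
      using True by simp
  next
    case False
    then have "insert x T \<inter> R = T \<inter> R"
      by blast
    with False show ?thesis
      by simp
  qed
  moreover have "v {} + (\<Sum>i<t. of_bool (os ! i \<in> R) * (v (set (take (Suc i) os)) - v (set (take i os))))
      \<le> v (T \<inter> R)"
    using Suc by (simp add: T_def)
  ultimately show ?case
    unfolding sum.lessThan_Suc prefix x_def[symmetric] T_def[symmetric] by linarith
qed simp

lemma sum_permutations_of_set_inter_prefix_ge:
  assumes U: "finite U" and sub: "submodular_setfun U v" and v0: "0 \<le> v {}"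
    and S: "S \<subseteq> U" and l: "l \<le> card U"
  shows "real l * real (card (permutations_of_set U)) / real (card U) * v S
    \<le> (\<Sum>xs\<in>permutations_of_set U. v (S \<inter> set (take l xs)))"
proof -
  obtain os where os: "set os = S" "distinct os"
    using finite_distinct_list finite_subset[OF S U] by blast
  define P q d where "P = permutations_of_set U" and "q = real l * real (card P) / real (card U)"
    and "d i = v (set (take (Suc i) os)) - v (set (take i os))" for i
  define m where "m xs = (\<Sum>i<length os. of_bool (os ! i \<in> set (take l xs)) * d i)" for xs
  have "(\<Sum>xs\<in>P. v {} + m xs) \<le> (\<Sum>xs\<in>P. v (S \<inter> set (take l xs)))"
    using submodular_inter_ge_sum_marginals[OF sub os(2), of "length os"] os S
    by (intro sum_mono) (simp add: m_def d_def mult.commute)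
  moreover have "(\<Sum>xs\<in>P. m xs) = q * (v S - v {})"
  proof -
    have "(\<Sum>xs\<in>P. m xs) = (\<Sum>i<length os. (\<Sum>xs\<in>P. of_bool (os ! i \<in> set (take l xs))) * d i)"
      unfolding m_def by (simp add: sum.swap[of _ P] sum_distrib_right)
    also have "\<dots> = (\<Sum>i<length os. q * d i)"
    proof -
      have "(\<Sum>xs\<in>P. of_bool (os ! i \<in> set (take l xs))) = q" if "i < length os" for i
        unfolding P_def q_def using that os S
        by (intro sum_permutations_of_set_prefix_indicator[OF U _ l]) auto
      then show ?thesis
        by simp
    qed
    also have "\<dots> = q * (v S - v {})"
      using sum_lessThan_telescope[of "\<lambda>i. v (set (take i os))" "length os"] os(1)
      unfolding d_def by (simp add: sum_distrib_left[symmetric])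
    finally show ?thesis .
  qed
  moreover have "q \<le> real (card P)"
    using l by (cases "card U = 0") (simp_all add: q_def field_simps mult_right_mono)
  then have "q * v {} \<le> real (card P) * v {}"
    using v0 by (rule mult_right_mono)
  moreover have "(\<Sum>xs\<in>P. v {} + m xs) = real (card P) * v {} + (\<Sum>xs\<in>P. m xs)"
    by (simp add: sum.distrib)
  ultimately have "q * v S \<le> (\<Sum>xs\<in>P. v (S \<inter> set (take l xs)))"
    unfolding right_diff_distrib by linarith
  then show ?thesis
    by (simp add: q_def P_def)
qed

section \<open>The recursion for the expected value\<close>

locale submodular_secretary =
  fixes U :: "'a set" and k :: nat and v :: "'a set \<Rightarrow> real" and A :: "'a set \<Rightarrow> 'a set"
    and \<alpha> :: real and OPT :: "'a set"
  assumes finite_U: "finite U" and k_ge_2: "2 \<le> k"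
    and v_nonneg: "\<And>S. S \<subseteq> U \<Longrightarrow> 0 \<le> v S"
    and v_monotone: "monotone_setfun U v" and v_submodular: "submodular_setfun U v"
    and OPT_subset: "OPT \<subseteq> U" and card_OPT: "card OPT \<le> k"
    and \<alpha>_nonneg: "0 \<le> \<alpha>"
    and A_subset: "\<And>L. L \<subseteq> U \<Longrightarrow> A L \<subseteq> L"
    and card_A: "\<And>L. L \<subseteq> U \<Longrightarrow> card (A L) \<le> k"
    and A_approx: "\<And>L T. L \<subseteq> U \<Longrightarrow> T \<subseteq> L \<Longrightarrow> card T \<le> k \<Longrightarrow> \<alpha> * v T \<le> v (A L)"
begin

abbreviation arrival_orders :: "'a list set" where
  "arrival_orders \<equiv> permutations_of_set U"

lemma prefix_marginal_sum_ge:
  assumes L: "L \<subseteq> U" "card L = l" and S: "S' \<subseteq> S" "S \<subseteq> U"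
  shows "(real l - real k) * v S + (real k - 1) * v S' + \<alpha> * v (OPT \<inter> L)
    \<le> (\<Sum>j\<in>L. if j \<in> A L then v (insert j S') else v S)"
proof -
  define c where "c = card (A L)"
  have fin: "finite L"
    using L(1) finite_U finite_subset by blast
  have AL: "A L \<subseteq> L" "finite (A L)" "c \<le> k" "c \<le> l"
    using A_subset[OF L(1)] card_A[OF L(1)] card_mono[OF fin] L(2) fin finite_subset
    by (auto simp: c_def)
  have "(\<Sum>j\<in>L. if j \<in> A L then v (insert j S') else v S)
      = (\<Sum>j\<in>A L. v (insert j S')) + (real l - real c) * v S"
    using sum.subset_diff[OF AL(1) fin, of "\<lambda>j. if j \<in> A L then v (insert j S') else v S"]
      card_Diff_subset[OF AL(2,1)] AL(4) L(2)
    by (simp add: c_def of_nat_diff)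
  moreover have "v (A L \<union> S') - v S' \<le> (\<Sum>j\<in>A L. v (insert j S')) - real c * v S'"
    using submodular_union_le_sum_marginals[OF v_submodular AL(2)] AL(1) L(1) S
    by (simp add: sum_subtractf c_def)
  moreover have "\<alpha> * v (OPT \<inter> L) \<le> v (A L \<union> S')"
  proof -
    have "card (OPT \<inter> L) \<le> k"
      using card_mono[OF finite_subset[OF OPT_subset finite_U], of "OPT \<inter> L"] card_OPT by simp
    then have "\<alpha> * v (OPT \<inter> L) \<le> v (A L)"
      using A_approx[OF L(1)] by simp
    also have "\<dots> \<le> v (A L \<union> S')"
      using AL(1) L(1) S by (intro monotone_setfunD[OF v_monotone]) auto
    finally show ?thesis .
  qed
  moreover have "0 \<le> (real k - real c) * (v S - v S')"
    using AL(3) monotone_setfunD[OF v_monotone S] by simp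
  ultimately show ?thesis
    by (simp add: algebra_simps)
qed

text \<open>The value of \<open>ALG\<^sup>\<ge>\<^sup>l\<^sub>r\<close> if the prefix item \<open>j\<close> is the one arriving in round \<open>l\<close>.\<close>

definition arrival_value :: "'a list \<Rightarrow> nat \<Rightarrow> nat \<Rightarrow> 'a \<Rightarrow> real" where
  "arrival_value xs l r j = (if j \<in> A (set (take l xs)) then v (insert j (alg A xs (Suc l) (r - 1)))
    else v (alg A xs (Suc l) r))"

lemma v_alg_eq_arrival_value:
  assumes "xs \<in> arrival_orders" "1 \<le> l" "l \<le> card U" "1 \<le> r"
  shows "v (alg A xs l r) = arrival_value xs l r (xs ! (l - 1))"
  using assms alg_step[of l xs r A] length_finite_permutations_of_set[OF assms(1)]
  by (simp add: arrival_value_def)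

lemma arrival_value_list_swap:
  assumes "xs \<in> arrival_orders" "p < l" "l \<le> card U"
  shows "arrival_value (list_swap p (l - 1) xs) l r j = arrival_value xs l r j"
proof -
  have "set (take l (list_swap p (l - 1) xs)) = set (take l xs)"
    using assms length_finite_permutations_of_set[OF assms(1)] by (intro set_take_list_swap) auto
  moreover have "alg A (list_swap p (l - 1) xs) (Suc l) r' = alg A xs (Suc l) r'" for r'
    using assms by (intro alg_list_swap) auto
  ultimately show ?thesis
    by (simp add: arrival_value_def)
qed

lemma sum_alg_eq_sum_arrival_value:
  assumes l: "1 \<le> l" "l \<le> card U" and r: "1 \<le> r"
  shows "real l * (\<Sum>xs\<in>arrival_orders. v (alg A xs l r))
    = (\<Sum>xs\<in>arrival_orders. \<Sum>j\<in>set (take l xs). arrival_value xs l r j)"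
proof -
  have "(\<Sum>xs\<in>arrival_orders. \<Sum>j\<in>set (take l xs). arrival_value xs l r j)
      = (\<Sum>p<l. \<Sum>xs\<in>arrival_orders. arrival_value xs l r (xs ! p))"
    using finite_U l(2) by (rule sum_permutations_of_set_prefix)
  also have "\<dots> = (\<Sum>p<l. \<Sum>xs\<in>arrival_orders. arrival_value xs l r (xs ! (l - 1)))"
    using finite_U l arrival_value_list_swap by (intro sum.cong refl sum_permutations_of_set_nth_eq) auto
  also have "\<dots> = real l * (\<Sum>xs\<in>arrival_orders. v (alg A xs l r))"
    using v_alg_eq_arrival_value[OF _ l r] by simp
  finally show ?thesis ..
qed

lemma sum_arrival_value_ge:
  assumes xs: "xs \<in> arrival_orders" and l: "l \<le> card U" and r: "1 \<le> r"
  shows "(real l - real k) * v (alg A xs (Suc l) r) + (real k - 1) * v (alg A xs (Suc l) (r - 1))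
    + \<alpha> * v (OPT \<inter> set (take l xs)) \<le> (\<Sum>j\<in>set (take l xs). arrival_value xs l r j)"
proof -
  have "set (take l xs) \<subseteq> U"
    using set_take_subset[of l xs] permutations_of_setD(1)[OF xs] by simp
  moreover have "card (set (take l xs)) = l"
    using permutations_of_setD(2)[OF xs] l length_finite_permutations_of_set[OF xs]
    by (simp add: distinct_card)
  moreover have "alg A xs (Suc l) (r - 1) \<subseteq> alg A xs (Suc l) r"
    using alg_mono_budget[of A xs "Suc l" "r - 1"] r by simp
  moreover have "alg A xs (Suc l) r \<subseteq> U"
    using alg_subset_set[of A xs "Suc l" r] permutations_of_setD(1)[OF xs] by simp
  ultimately show ?thesis
    unfolding arrival_value_def by (rule prefix_marginal_sum_ge)
qed

lemma sum_alg_recursion: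
  assumes l: "1 \<le> l" "l \<le> card U" and r: "1 \<le> r"
  shows "(real l - real k) * (\<Sum>xs\<in>arrival_orders. v (alg A xs (Suc l) r))
      + (real k - 1) * (\<Sum>xs\<in>arrival_orders. v (alg A xs (Suc l) (r - 1)))
      + \<alpha> * (real l * real (card arrival_orders) / real (card U) * v OPT)
    \<le> real l * (\<Sum>xs\<in>arrival_orders. v (alg A xs l r))"
proof -
  have "real l * real (card arrival_orders) / real (card U) * v OPT
      \<le> (\<Sum>xs\<in>arrival_orders. v (OPT \<inter> set (take l xs)))"
    using finite_U v_submodular v_nonneg OPT_subset l(2) by (intro sum_permutations_of_set_inter_prefix_ge) auto
  then have "\<alpha> * (real l * real (card arrival_orders) / real (card U) * v OPT)
      \<le> \<alpha> * (\<Sum>xs\<in>arrival_orders. v (OPT \<inter> set (take l xs)))"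
    using \<alpha>_nonneg by (rule mult_left_mono)
  moreover have "(\<Sum>xs\<in>arrival_orders. (real l - real k) * v (alg A xs (Suc l) r)
        + (real k - 1) * v (alg A xs (Suc l) (r - 1)) + \<alpha> * v (OPT \<inter> set (take l xs)))
      \<le> real l * (\<Sum>xs\<in>arrival_orders. v (alg A xs l r))"
    unfolding sum_alg_eq_sum_arrival_value[OF l r] using l(2) r
    by (intro sum_mono sum_arrival_value_ge)
  ultimately show ?thesis
    by (simp add: sum.distrib sum_distrib_left)
qed

lemma sum_alg_ge_guarantee:
  assumes l: "k \<le> l" "l \<le> card U"
  shows "real (card arrival_orders) * (\<alpha> * v OPT / (real k - 1))
      * (guarantee k r (real l / real (card U)) - 3 * real k ^ 2 * real r / real (card U))
    \<le> (\<Sum>xs\<in>arrival_orders. v (alg A xs l r))"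
proof -
  define n N where "n = card U" and "N = card arrival_orders"
  define B where "B = real N * (\<alpha> * v OPT / (real k - 1))"
  define G F where "G r' l' = guarantee k r' (real l' / real n) - 3 * real k ^ 2 * real r' / real n"
    and "F r' l' = (\<Sum>xs\<in>arrival_orders. v (alg A xs l' r'))" for r' l'
  have B: "0 \<le> B"
    using k_ge_2 \<alpha>_nonneg v_nonneg[OF OPT_subset] by (simp add: B_def)
  have BK: "B * ((real k - 1) * real m / real n) = \<alpha> * (real m * real N / real n * v OPT)" for m
  proof -
    have "B * (real k - 1) = real N * (\<alpha> * v OPT)"
      using k_ge_2 by (simp add: B_def)
    then show ?thesis
      by (metis (no_types, lifting) mult.commute mult.left_commute times_divide_eq_left times_divide_eq_right)
  qed
  have F: "0 \<le> F r' l'" for r' l'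
    unfolding F_def by (intro sum_nonneg v_nonneg) (metis alg_subset_set permutations_of_setD(1))
  have n: "k \<le> n"
    using l by (simp add: n_def)
  have G_nonpos: "G r n \<le> 0" for r
    using n k_ge_2 by (simp add: G_def)
  have "B * G r l \<le> F r l"
    using l(2) unfolding n_def[symmetric]
  proof (induction l arbitrary: r rule: inc_induct)
    case base
    show ?case
      using mult_left_mono[OF G_nonpos[of r] B] F[of r n] by simp
  next
    case (step m)
    have m: "1 \<le> m" "k \<le> m" "m < n"
      using step.hyps l(1) k_ge_2 by simp_all
    show ?case
    proof (cases "r = 0")
      case True
      then have "G r m \<le> 0"
        by (simp add: G_def)
      then show ?thesis
        using mult_left_mono[of "G r m" 0 B] B F[of r m] by simp
    next
      case False
      have key: "real m * G r m \<le> (real m - real k) * G r (Suc m) + (real k - 1) * G (r - 1) (Suc m)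
          + (real k - 1) * real m / real n"
        unfolding G_def using m False k_ge_2 by (intro guarantee_backward_step) auto
      have rec: "(real m - real k) * F r (Suc m) + (real k - 1) * F (r - 1) (Suc m)
          + B * ((real k - 1) * real m / real n) \<le> real m * F r m"
        unfolding BK unfolding F_def N_def n_def using m False by (intro sum_alg_recursion) (simp_all add: n_def)
      have "0 \<le> real m - real k" "0 \<le> real k - 1" "0 < real m"
        using m k_ge_2 by simp_all
      with key rec step.IH[of r] step.IH[of "r - 1"] B show ?thesis
        by (rule lower_bound_step)
    qed
  qed
  then show ?thesis
    by (simp add: B_def G_def F_def n_def N_def)
qed

lemma expectation_alg_ge:
  assumes l: "k \<le> l" "l \<le> card U"
  shows "(real r * real l / ((real k - 1) * real (card U))
        - 1 / (real k - 1) * (real l / real (card U)) ^ k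
          * (\<Sum>r'<r. \<Sum>i\<le>r'. (real k - 1) ^ i / fact i * (ln (real (card U) / real l)) ^ i)
        - 3 * real k ^ 2 * real r / ((real k - 1) * real (card U))) * \<alpha> * v OPT
    \<le> measure_pmf.expectation (pmf_of_set arrival_orders) (\<lambda>xs. v (alg A xs l r))"
proof -
  define N where "N = real (card arrival_orders)"
  have "finite arrival_orders" "arrival_orders \<noteq> {}"
    using finite_U by simp_all
  then have "measure_pmf.expectation (pmf_of_set arrival_orders) (\<lambda>xs. v (alg A xs l r))
      = (\<Sum>xs\<in>arrival_orders. v (alg A xs l r)) / N" and "0 < N"
    by (simp_all add: N_def integral_pmf_of_set card_gt_0_iff)
  moreover have "N * (\<alpha> * v OPT / (real k - 1)
      * (guarantee k r (real l / real (card U)) - 3 * real k ^ 2 * real r / real (card U)))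
    \<le> (\<Sum>xs\<in>arrival_orders. v (alg A xs l r))"
    using sum_alg_ge_guarantee[OF l, of r] by (simp add: N_def mult.assoc)
  moreover have "0 < l" "0 < card U"
    using l k_ge_2 by simp_all
  ultimately show ?thesis
    unfolding guarantee_bound_formula[OF \<open>0 < l\<close> \<open>0 < card U\<close> k_ge_2]
    by (simp add: pos_le_divide_eq mult.commute)
qed

end

theorem mainTheorem4:
  fixes U :: "'a set" and n k :: nat and v :: "'a set \<Rightarrow> real"
    and A :: "'a set \<Rightarrow> 'a set" and \<alpha> :: real and OPT :: "'a set"
  assumes finU: "finite U" and n_def: "n = card U"
    and k2: "k \<ge> 2"
    and v_nonneg: "\<And>S. S \<subseteq> U \<Longrightarrow> v S \<ge> 0"
    and v_mono: "monotone_setfun U v"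
    and v_sub: "submodular_setfun U v"
    and OPT_sub: "OPT \<subseteq> U" and OPT_card: "card OPT \<le> k"
    and OPT_max: "\<And>S. S \<subseteq> U \<Longrightarrow> card S \<le> k \<Longrightarrow> v S \<le> v OPT"
    and \<alpha>_pos: "0 < \<alpha>" and \<alpha>_le1: "\<alpha> \<le> 1"
    and A_sub: "\<And>L. L \<subseteq> U \<Longrightarrow> A L \<subseteq> L"
    and A_card: "\<And>L. L \<subseteq> U \<Longrightarrow> card (A L) \<le> k"
    and A_approx: "\<And>L T. L \<subseteq> U \<Longrightarrow> T \<subseteq> L \<Longrightarrow> card T \<le> k \<Longrightarrow> v (A L) \<ge> \<alpha> * v T"
  shows "\<forall>l r. 1 \<le> l \<and> l \<le> n \<and> l \<ge> k^2 + k \<and> r \<le> k \<longrightarrow>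
    measure_pmf.expectation (pmf_of_set (permutations_of_set U)) (\<lambda>xs. v (alg A xs l r))
    \<ge> (real r * real l / ((real k - 1) * real n)
        - 1 / (real k - 1) * (real l / real n) ^ k
          * (\<Sum>r'<r. \<Sum>i\<le>r'. (real k - 1) ^ i / fact i * (ln (real n / real l)) ^ i)
        - 3 * real k ^ 2 * real r / ((real k - 1) * real n)) * \<alpha> * v OPT"
proof (intro allI impI)
  fix l r
  assume "1 \<le> l \<and> l \<le> n \<and> l \<ge> k^2 + k \<and> r \<le> k"
  then have "k \<le> l" "l \<le> card U"
    using n_def by simp_all
  interpret submodular_secretary U k v A \<alpha> OPT
    using assms by unfold_locales auto
  show "(real r * real l / ((real k - 1) * real n)
        - 1 / (real k - 1) * (real l / real n) ^ k
          * (\<Sum>r'<r. \<Sum>i\<le>r'. (real k - 1) ^ i / fact i * (ln (real n / real l)) ^ i)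
        - 3 * real k ^ 2 * real r / ((real k - 1) * real n)) * \<alpha> * v OPT
    \<le> measure_pmf.expectation (pmf_of_set (permutations_of_set U)) (\<lambda>xs. v (alg A xs l r))"
    using expectation_alg_ge[OF \<open>k \<le> l\<close> \<open>l \<le> card U\<close>] n_def by simp
qed

end
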